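(* Let $\mathbb{K}$ be a field of characteristic not $2,3$ and let $\mathbb{T}=\mathbb{K}^3$ with multiplication $$x\circ y=\Big(x_1y_1-\tfrac12x_2y_3-\tfrac12x_3y_2,\ x_2y_2-\tfrac12x_1y_3-\tfrac12x_3y_1,\ x_3y_3-\tfrac12x_1y_2-\tfrac12x_2y_1\Big).$$ Then $\mathbb{T}$ is isospectral. If $\mathbb{K}$ is infinite, $\mathbb{T}$ is non-generic. The set of nonzero idempotents of $\mathbb{T}$ is $$\{(x_1,x_2,x_3)\in\mathbb{K}^3:\ x_1^2+x_2^2+x_3^2=x_1+x_2+x_3=1\},$$ and every nonzero idempotent has spectrum $\{1,-\tfrac12,\tfrac12\}$.
   Context: For an idempotent $c$, its spectrum is the multiset of eigenvalues of $L_c:x\mapsto c\circ x$. An algebra is isospectral if all its nonzero idempotents have the same spectrum. A commutative algebra of dimension $n$ is generic if (over an algebraic closure / complexification) it has exactly $2^n$ distinct idempotents (including $0$). *)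

theory Defs
  imports "HOL-Analysis.Analysis" "HOL-Computational_Algebra.Polynomial" "HOL-Library.Multiset"
begin

definition tmul :: "'a::field ^ 3 \<Rightarrow> 'a ^ 3 \<Rightarrow> 'a ^ 3" where
  "tmul x y = vector
     [x$1*y$1 - x$2*y$3/2 - x$3*y$2/2,
      x$2*y$2 - x$1*y$3/2 - x$3*y$1/2,
      x$3*y$3 - x$1*y$2/2 - x$2*y$1/2]"

definition idempotent :: "('v \<Rightarrow> 'v \<Rightarrow> 'v) \<Rightarrow> 'v \<Rightarrow> bool" where
  "idempotent mul c \<longleftrightarrow> mul c c = c"

definition Lmat :: "('a::field ^ 'n \<Rightarrow> 'a ^ 'n \<Rightarrow> 'a ^ 'n) \<Rightarrow> 'a ^ 'n \<Rightarrow> 'a ^ 'n ^ 'n" where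
  "Lmat mul c = (\<chi> i j. (mul c (axis j 1)) $ i)"

definition charpoly :: "'a::field ^ 'n ^ 'n \<Rightarrow> 'a poly" where
  "charpoly A = det (mat [:0, 1:] - (\<chi> i j. [:A $ i $ j:]))"

definition has_spectrum :: "('a::field ^ 'n \<Rightarrow> 'a ^ 'n \<Rightarrow> 'a ^ 'n) \<Rightarrow> 'a ^ 'n \<Rightarrow> 'a multiset \<Rightarrow> bool" where
  "has_spectrum mul c M \<longleftrightarrow> charpoly (Lmat mul c) = (\<Prod>a\<in>#M. [:- a, 1:])"

text \<open>Isospectral: all nonzero idempotents have the same spectrum (multiset of eigenvalues
  over an algebraic closure), equivalently the same characteristic polynomial of L_c.\<close>
definition isospectral :: "('a::field ^ 'n \<Rightarrow> 'a ^ 'n \<Rightarrow> 'a ^ 'n) \<Rightarrow> bool" where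
  "isospectral mul \<longleftrightarrow>
     (\<forall>c d. idempotent mul c \<and> c \<noteq> 0 \<and> idempotent mul d \<and> d \<noteq> 0
        \<longrightarrow> charpoly (Lmat mul c) = charpoly (Lmat mul d))"

definition has_2n_idempotents :: "('a ^ 'n \<Rightarrow> 'a ^ 'n \<Rightarrow> 'a ^ 'n) \<Rightarrow> bool" where
  "has_2n_idempotents mul \<longleftrightarrow>
     finite {c. idempotent mul c} \<and> card {c. idempotent mul c} = 2 ^ CARD('n)"

definition is_alg_closure :: "('a::field \<Rightarrow> 'b::field) \<Rightarrow> bool" where
  "is_alg_closure \<phi> \<longleftrightarrow>
     \<phi> 1 = 1 \<and> (\<forall>x y. \<phi> (x + y) = \<phi> x + \<phi> y) \<and> (\<forall>x y. \<phi> (x * y) = \<phi> x * \<phi> y)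
     \<and> (\<forall>p :: 'b poly. degree p \<ge> 1 \<longrightarrow> (\<exists>z. poly p z = 0))
     \<and> (\<forall>z :: 'b. \<exists>p :: 'a poly. p \<noteq> 0 \<and> poly (map_poly \<phi> p) z = 0)"

end

(* With s, q, e the sum, the sum of squares and the sum of pairwise products of the coordinates
   of c, idempotency reads c_i^2 - c_j c_k = c_i. Subtracting two of these equations gives
   (c_i - c_j)(s - 1) = 0, so a nonzero idempotent has s = 1; adding them gives q - e = s, and with
   s^2 = q + 2e this forces q = 1, e = 0. Conversely s = 1, e = 0 give back the equations.
   L_c is symmetric with diagonal c and off-diagonal entries -c_k/2, so its characteristic
   polynomial t^3 - s t^2 + (e - q/4) t + s (q - e)/4 depends only on s, q, e; on the conic
   s = q = 1 it is (t - 1)(t^2 - 1/4). Over an algebraically closed field every first coordinate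
   extends to a point of the conic, so there are infinitely many idempotents. *)

theory Submission
  imports Defs
begin

lemma numeral_Bit0_eq_0_iff:
  assumes "(2::'a::field) \<noteq> 0"
  shows "(numeral (Num.Bit0 n) :: 'a) = 0 \<longleftrightarrow> (numeral n :: 'a) = 0"
  using assms by (metis mult_2 mult_eq_0_iff numeral_Bit0)

lemma tmul_self:
  fixes c :: "'a::field ^ 3"
  assumes "(2::'a) \<noteq> 0"
  shows "tmul c c = vector [(c$1)^2 - c$2*c$3, (c$2)^2 - c$1*c$3, (c$3)^2 - c$1*c$2]"
proof -
  have halves: "x / 2 + x / 2 = x" for x :: 'a
    using assms by (simp add: field_simps)
  show ?thesis
    unfolding tmul_def by (simp add: power2_eq_square diff_diff_eq mult.commute halves)
qed

lemma idempotent_tmul_iff: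
  fixes c :: "'a::field ^ 3"
  assumes "(2::'a) \<noteq> 0"
  shows "idempotent tmul c \<longleftrightarrow>
    (c$1)^2 - c$2*c$3 = c$1 \<and> (c$2)^2 - c$1*c$3 = c$2 \<and> (c$3)^2 - c$1*c$2 = c$3"
  unfolding idempotent_def tmul_self[OF assms] vec_eq_iff forall_3 by simp

lemma square_sum_3:
  fixes x y z :: "'a::comm_ring_1"
  shows "(x + y + z)^2 = x^2 + y^2 + z^2 + 2 * (x*y + x*z + y*z)"
  by (simp add: power2_eq_square algebra_simps)

lemma square_minus_product_eq:
  fixes x y z :: "'a::comm_ring_1"
  assumes "x + y + z = 1" and "x*y + x*z + y*z = 0"
  shows "x^2 - y*z = x"
proof -
  have "y*z = - (x * (y + z))"
    using assms(2) by (simp add: algebra_simps eq_neg_iff_add_eq_0)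
  also have "y + z = 1 - x"
    using assms(1) by (simp add: algebra_simps)
  finally show ?thesis
    by (simp add: algebra_simps power2_eq_square)
qed

lemma sum_products_eq_0:
  fixes x y z :: "'a::field"
  assumes "(2::'a) \<noteq> 0" and "x + y + z = 1" and "x^2 + y^2 + z^2 = 1"
  shows "x*y + x*z + y*z = 0"
proof -
  have "2 * (x*y + x*z + y*z) = 0"
    using square_sum_3[of x y z] assms(2,3) by simp
  with assms(1) show ?thesis
    by (simp only: mult_eq_0_iff simp_thms)
qed

lemma idempotent_tmulI:
  fixes c :: "'a::field ^ 3"
  assumes two: "(2::'a) \<noteq> 0"
    and sum: "c$1 + c$2 + c$3 = 1" and sq: "(c$1)^2 + (c$2)^2 + (c$3)^2 = 1"
  shows "idempotent tmul c"
proof -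
  have e: "c$1*c$2 + c$1*c$3 + c$2*c$3 = 0"
    using sum_products_eq_0[OF two sum sq] .
  have "(c$1)^2 - c$2*c$3 = c$1"
    by (rule square_minus_product_eq) (use sum e in \<open>simp_all add: algebra_simps\<close>)
  moreover have "(c$2)^2 - c$1*c$3 = c$2"
    by (rule square_minus_product_eq) (use sum e in \<open>simp_all add: algebra_simps\<close>)
  moreover have "(c$3)^2 - c$1*c$2 = c$3"
    by (rule square_minus_product_eq) (use sum e in \<open>simp_all add: algebra_simps\<close>)
  ultimately show ?thesis
    using idempotent_tmul_iff[OF two] by blast
qed

lemma nonzero_idempotent_tmulD:
  fixes c :: "'a::field ^ 3"
  assumes two: "(2::'a) \<noteq> 0" and three: "(3::'a) \<noteq> 0"
    and "idempotent tmul c" and "c \<noteq> 0"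
  shows "c$1 + c$2 + c$3 = 1" and "(c$1)^2 + (c$2)^2 + (c$3)^2 = 1"
proof -
  have e1: "(c$1)^2 - c$2*c$3 = c$1" and e2: "(c$2)^2 - c$1*c$3 = c$2" and e3: "(c$3)^2 - c$1*c$2 = c$3"
    using assms(3) idempotent_tmul_iff[OF two] by auto
  have "(c$1 - c$2) * (c$1 + c$2 + c$3 - 1) = 0" "(c$1 - c$3) * (c$1 + c$2 + c$3 - 1) = 0"
    using e1 e2 e3 by (simp_all add: algebra_simps power2_eq_square)
  moreover have "\<not> (c$2 = c$1 \<and> c$3 = c$1)"
  proof
    assume eq: "c$2 = c$1 \<and> c$3 = c$1"
    with e1 have "c$1 = 0"
      by (simp add: power2_eq_square)
    with eq have "c = 0"
      by (simp add: vec_eq_iff forall_3)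
    with \<open>c \<noteq> 0\<close> show False ..
  qed
  ultimately show sum: "c$1 + c$2 + c$3 = 1"
    by auto
  define q where "q = (c$1)^2 + (c$2)^2 + (c$3)^2"
  define e where "e = c$1*c$2 + c$1*c$3 + c$2*c$3"
  have "q - e = 1"
    using e1 e2 e3 sum unfolding q_def e_def by (simp add: algebra_simps)
  moreover have "q + 2 * e = 1"
    using square_sum_3[of "c$1" "c$2" "c$3"] sum unfolding q_def e_def by simp
  moreover have "3 * q = (q + 2 * e) + 2 * (q - e)"
    by (simp add: algebra_simps)
  ultimately have "3 * q = 3"
    by simp
  with three have "q = 1"
    by (metis mult.right_neutral mult_cancel_left)
  then show "(c$1)^2 + (c$2)^2 + (c$3)^2 = 1"
    unfolding q_def .
qed

lemma charpoly_Lmat_tmul: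
  fixes c :: "'a::field ^ 3"
  defines "s \<equiv> c$1 + c$2 + c$3"
    and "q \<equiv> (c$1)^2 + (c$2)^2 + (c$3)^2"
    and "e \<equiv> c$1*c$2 + c$1*c$3 + c$2*c$3"
  assumes "(2::'a) \<noteq> 0"
  shows "charpoly (Lmat tmul c) = [:s * (q - e) / 4, e - q / 4, - s, 1:]"
  unfolding charpoly_def Lmat_def det_3 s_def q_def e_def using assms(4)
  by (simp add: axis_def mat_def tmul_def field_simps power2_eq_square numeral_Bit0_eq_0_iff)

lemma nonzero_idempotents_tmul:
  assumes "(2::'a::field) \<noteq> 0" and "(3::'a) \<noteq> 0"
  shows "{c :: 'a ^ 3. idempotent tmul c \<and> c \<noteq> 0} =
    {c. (c$1)^2 + (c$2)^2 + (c$3)^2 = 1 \<and> c$1 + c$2 + c$3 = 1}"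
proof -
  have "c \<noteq> 0" if "c$1 + c$2 + c$3 = 1" for c :: "'a ^ 3"
    using that by auto
  then show ?thesis
    using nonzero_idempotent_tmulD[OF assms] idempotent_tmulI[OF assms(1)] by blast
qed

lemma has_spectrum_tmul:
  fixes c :: "'a::field ^ 3"
  assumes two: "(2::'a) \<noteq> 0" and three: "(3::'a) \<noteq> 0"
    and "idempotent tmul c" and "c \<noteq> 0"
  shows "has_spectrum tmul c {#1, -1/2, 1/2#}"
proof -
  note sum = nonzero_idempotent_tmulD(1)[OF assms] and sq = nonzero_idempotent_tmulD(2)[OF assms]
  have "charpoly (Lmat tmul c) = [:1/4, -1/4, -1, 1:]"
    unfolding charpoly_Lmat_tmul[OF two] sum sq sum_products_eq_0[OF two sum sq] by simp
  then show ?thesis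
    unfolding has_spectrum_def by simp
qed

lemma infinite_idempotents_tmul:
  assumes two: "(2::'a::field) \<noteq> 0" and inf: "infinite (UNIV :: 'a set)"
    and roots: "\<And>p :: 'a poly. degree p \<ge> 1 \<Longrightarrow> \<exists>z. poly p z = 0"
  shows "infinite {c :: 'a ^ 3. idempotent tmul c}"
proof -
  \<comment> \<open>(a, r, 1 - a - r) lies on the conic iff r is a root of this quadratic.\<close>
  define r where "r a = (SOME z. poly [:a^2 - a, a - 1, 1:] z = 0)" for a :: 'a
  have r: "(r a)^2 + (a - 1) * r a + (a^2 - a) = 0" for a
  proof -
    have "\<exists>z. poly [:a^2 - a, a - 1, 1:] z = 0"
      by (rule roots) simp
    then have "poly [:a^2 - a, a - 1, 1:] (r a) = 0"
      unfolding r_def by (rule someI_ex)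
    then show ?thesis
      by (simp add: algebra_simps power2_eq_square)
  qed
  define f where "f a = (vector [a, r a, 1 - a - r a] :: 'a ^ 3)" for a
  have "idempotent tmul (f a)" for a
  proof (rule idempotent_tmulI[OF two])
    show "f a $ 1 + f a $ 2 + f a $ 3 = 1"
      by (simp add: f_def)
    have "(f a $ 1)^2 + (f a $ 2)^2 + (f a $ 3)^2 = 1 + 2 * ((r a)^2 + (a - 1) * r a + (a^2 - a))"
      by (simp add: f_def algebra_simps power2_eq_square)
    then show "(f a $ 1)^2 + (f a $ 2)^2 + (f a $ 3)^2 = 1"
      by (simp add: r)
  qed
  then have "range f \<subseteq> {c. idempotent tmul c}"
    by blast
  moreover have "inj f"
  proof (rule injI)
    fix a b
    assume "f a = f b"
    then have "f a $ 1 = f b $ 1"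
      by simp
    then show "a = b"
      by (simp add: f_def)
  qed
  then have "infinite (range f)"
    using inf finite_imageD by blast
  ultimately show ?thesis
    using finite_subset by blast
qed

lemma is_alg_closureD:
  fixes \<phi> :: "'a::field \<Rightarrow> 'b::field" and p :: "'b poly"
  assumes "is_alg_closure \<phi>"
  shows "\<phi> 1 = 1" and "\<phi> (x + y) = \<phi> x + \<phi> y" and "\<phi> (x * y) = \<phi> x * \<phi> y"
    and "degree p \<ge> 1 \<Longrightarrow> \<exists>z. poly p z = 0"
  using assms unfolding is_alg_closure_def by auto

lemma is_alg_closure_nonzero:
  assumes "is_alg_closure \<phi>" and "x \<noteq> 0"
  shows "\<phi> x \<noteq> 0"
proof
  assume "\<phi> x = 0"
  then have "\<phi> (x * inverse x) = 0"
    by (simp add: is_alg_closureD(3)[OF assms(1)])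
  with assms show False
    by (simp add: is_alg_closureD(1))
qed

lemma is_alg_closure_inj:
  assumes "is_alg_closure \<phi>"
  shows "inj \<phi>"
proof (rule injI)
  fix x y
  assume "\<phi> x = \<phi> y"
  moreover have "\<phi> x = \<phi> (x - y) + \<phi> y"
    using is_alg_closureD(2)[OF assms, of "x - y" y] by simp
  ultimately have "\<phi> (x - y) = 0"
    by (metis add_cancel_left_left)
  with is_alg_closure_nonzero[OF assms, of "x - y"] show "x = y"
    by auto
qed

lemma is_alg_closure_two_nonzero:
  fixes \<phi> :: "'a::field \<Rightarrow> 'b::field"
  assumes "is_alg_closure \<phi>" and "(2::'a) \<noteq> 0"
  shows "(2::'b) \<noteq> 0"
proof -
  have "\<phi> 2 = 2"
    using is_alg_closureD(2)[OF assms(1), of 1 1] is_alg_closureD(1)[OF assms(1)] by simp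
  with is_alg_closure_nonzero[OF assms] show ?thesis
    by simp
qed

lemma not_has_2n_idempotents_tmul_alg_closure:
  fixes \<phi> :: "'a::field \<Rightarrow> 'b::field"
  assumes "is_alg_closure \<phi>" and "(2::'a) \<noteq> 0" and "infinite (UNIV :: 'a set)"
  shows "\<not> has_2n_idempotents (tmul :: 'b ^ 3 \<Rightarrow> 'b ^ 3 \<Rightarrow> 'b ^ 3)"
proof -
  have "infinite (range \<phi>)"
    using finite_imageD[OF _ is_alg_closure_inj[OF assms(1)]] assms(3) by blast
  then have "infinite (UNIV :: 'b set)"
    by (rule infinite_super[rotated]) simp
  then have "infinite {c :: 'b ^ 3. idempotent tmul c}"
    by (rule infinite_idempotents_tmul[OF is_alg_closure_two_nonzero[OF assms(1,2)]])
      (rule is_alg_closureD(4)[OF assms(1)])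
  then show ?thesis
    unfolding has_2n_idempotents_def by blast
qed

theorem proposition9p6:
  fixes \<phi> :: "'a::field \<Rightarrow> 'b::field"
  assumes char2: "(2::'a) \<noteq> 0" and char3: "(3::'a) \<noteq> 0"
  shows "isospectral (tmul :: 'a ^ 3 \<Rightarrow> 'a ^ 3 \<Rightarrow> 'a ^ 3)
    \<and> (infinite (UNIV :: 'a set) \<and> is_alg_closure \<phi>
           \<longrightarrow> \<not> has_2n_idempotents (tmul :: 'b ^ 3 \<Rightarrow> 'b ^ 3 \<Rightarrow> 'b ^ 3))
    \<and> {x :: 'a ^ 3. idempotent tmul x \<and> x \<noteq> 0} =
           {x. (x$1)^2 + (x$2)^2 + (x$3)^2 = 1 \<and> x$1 + x$2 + x$3 = 1}
    \<and> (\<forall>c :: 'a ^ 3. idempotent tmul c \<and> c \<noteq> 0 \<longrightarrow> has_spectrum tmul c {#1, -1/2, 1/2#})"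
proof (intro conjI impI allI)
  show "has_spectrum tmul c {#1, -1/2, 1/2#}"
    if "idempotent tmul c \<and> c \<noteq> 0" for c :: "'a ^ 3"
    using has_spectrum_tmul[OF char2 char3] that by blast
  then show "isospectral (tmul :: 'a ^ 3 \<Rightarrow> 'a ^ 3 \<Rightarrow> 'a ^ 3)"
    unfolding isospectral_def has_spectrum_def by metis
  show "\<not> has_2n_idempotents (tmul :: 'b ^ 3 \<Rightarrow> 'b ^ 3 \<Rightarrow> 'b ^ 3)"
    if "infinite (UNIV :: 'a set) \<and> is_alg_closure \<phi>"
    using not_has_2n_idempotents_tmul_alg_closure[of \<phi>] char2 that by simp
  show "{x :: 'a ^ 3. idempotent tmul x \<and> x \<noteq> 0} =
      {x. (x$1)^2 + (x$2)^2 + (x$3)^2 = 1 \<and> x$1 + x$2 + x$3 = 1}"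
    using nonzero_idempotents_tmul[OF char2 char3] .
qed

end
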